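(* Let $p'$ be a joint distribution of two binary random variables $(D,E)$ with $p'(E=1)>0$ and $p'(E=0)>0$, and let $M',m'$ be real numbers in the feasible region for $p'$, i.e. $\max_{e\in\{0,1\}} p'(D=1\mid E=e)\le M'\le 1$ and $0\le m'\le \min_{e\in\{0,1\}} p'(D=1\mid E=e)$. Then for every $\delta>0$ there exists a joint distribution $p(D,E,U)$, with $D,E$ binary and $U$ categorical (finitely many values), satisfying positivity (i.e. $p(U=u)>0$ implies $p(E=e\mid U=u)>0$ for both $e\in\{0,1\}$), such that, writing $M=\max_{e,u} p(D=1\mid E=e,U=u)$ and $m=\min_{e,u}p(D=1\mid E=e,U=u)$ (over $e\in\{0,1\}$ and $u$ with $p(U=u)>0$): (i) $|M-M'|<\delta$, $|m-m'|<\delta$, and $|p(D=d,E=e)-p'(D=d,E=e)|<\delta$ for all $d,e\in\{0,1\}$; and (ii) simultaneously, $$\bigl|\,p(D_1=1)-\bigl[p(D=1,E=1)+p(E=0)\,M\bigr]\bigr|<\delta \quad\text{and}\quad \bigl|\,p(D_0=1)-\bigl[p(D=1,E=0)+p(E=1)\,m\bigr]\bigr|<\delta,$$ where $p(D_e=1)=\sum_u p(D=1\mid E=e,U=u)\,p(U=u)$ is the counterfactual probability of the outcome under exposure level $e$.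
   Context: Setting: $E$ (exposure) and $D$ (outcome) are binary, $U$ is an unmeasured categorical confounder, and the causal structure is the graph $U\to E$, $U\to D$, $E\to D$, interpreted as a non-parametric structural equation model with independent errors. $D_e$ denotes the counterfactual outcome when the exposure is set to $E=e$; under this model (counterfactual consistency and $D_e\perp E\mid U$) one has $p(D_e=1)=\sum_u p(D=1\mid E=e,U=u)p(U=u)$. The sensitivity parameters are $M=\max_{e,u}p(D=1\mid E=e,U=u)$ and $m=\min_{e,u}p(D=1\mid E=e,U=u)$. For any such model one has the bounds $p(D=1,E=e)+p(E=1-e)\,m\le p(D_e=1)\le p(D=1,E=e)+p(E=1-e)\,M$; the theorem says the upper bound for $p(D_1=1)$ and the lower bound for $p(D_0=1)$ are simultaneously arbitrarily sharp. *)

theory Defs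
  imports "HOL-Probability.Probability"
begin

definition obsDE :: "(bool \<times> bool) pmf \<Rightarrow> bool \<Rightarrow> bool \<Rightarrow> real" where
  "obsDE q d e = pmf q (d, e)"

definition obsE :: "(bool \<times> bool) pmf \<Rightarrow> bool \<Rightarrow> real" where
  "obsE q e = measure_pmf.prob q {x. snd x = e}"

definition obsCond :: "(bool \<times> bool) pmf \<Rightarrow> bool \<Rightarrow> real" where
  "obsCond q e = obsDE q True e / obsE q e"

definition pU :: "(bool \<times> bool \<times> nat) pmf \<Rightarrow> nat \<Rightarrow> real" where
  "pU p u = measure_pmf.prob p {x. snd (snd x) = u}"

definition pEU :: "(bool \<times> bool \<times> nat) pmf \<Rightarrow> bool \<Rightarrow> nat \<Rightarrow> real" where
  "pEU p e u = measure_pmf.prob p {x. fst (snd x) = e \<and> snd (snd x) = u}"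

definition pDE :: "(bool \<times> bool \<times> nat) pmf \<Rightarrow> bool \<Rightarrow> bool \<Rightarrow> real" where
  "pDE p d e = measure_pmf.prob p {x. fst x = d \<and> fst (snd x) = e}"

definition pE :: "(bool \<times> bool \<times> nat) pmf \<Rightarrow> bool \<Rightarrow> real" where
  "pE p e = measure_pmf.prob p {x. fst (snd x) = e}"

definition Usupp :: "(bool \<times> bool \<times> nat) pmf \<Rightarrow> nat set" where
  "Usupp p = {u. pU p u > 0}"

definition condD :: "(bool \<times> bool \<times> nat) pmf \<Rightarrow> bool \<Rightarrow> nat \<Rightarrow> real" where
  "condD p e u = pmf p (True, e, u) / pEU p e u"

definition positivity :: "(bool \<times> bool \<times> nat) pmf \<Rightarrow> bool" where
  "positivity p \<longleftrightarrow> (\<forall>u e. pU p u > 0 \<longrightarrow> pEU p e u / pU p u > 0)"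

definition sensM :: "(bool \<times> bool \<times> nat) pmf \<Rightarrow> real" where
  "sensM p = Max {condD p e u | e u. u \<in> Usupp p}"

definition sensm :: "(bool \<times> bool \<times> nat) pmf \<Rightarrow> real" where
  "sensm p = Min {condD p e u | e u. u \<in> Usupp p}"

definition pCF :: "(bool \<times> bool \<times> nat) pmf \<Rightarrow> bool \<Rightarrow> real" where
  "pCF p e = (\<Sum>u\<in>Usupp p. condD p e u * pU p u)"

end

theory Submission
  imports Defs
begin

text \<open>Take a confounder U that almost determines the exposure: stratum U = e has the
observed weight p'(E = e) and exposure E = e except with probability \<epsilon>. In the typical
cells the outcome probability is the observed p'(D = 1 | E = e); in the rare cells
(E = 1, U = 0) and (E = 0, U = 1) it is the extreme value M' resp. m'. Then M = M' and
m = m' exactly, the law of (D, E) is within \<epsilon> of p', and p(D_1 = 1) differs from the upper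
bound p(D = 1, E = 1) + p(E = 0) M only through the rare cell (E = 0, U = 1), whose
probability is at most \<epsilon>; symmetrically for D_0. Letting \<epsilon> tend to 0 gives the theorem.\<close>

lemma obsE_eq_sum_obsDE: "obsE q e = obsDE q True e + obsDE q False e"
proof -
  have "{x. snd x = e} = {(True, e), (False, e)}" by auto
  then show ?thesis by (simp add: obsE_def obsDE_def measure_measure_pmf_finite)
qed

lemma obsE_True_plus_obsE_False: "obsE q True + obsE q False = 1"
  using measure_pmf.prob_compl[of "{x. snd x = True}" q]
  by (simp add: obsE_def set_diff_eq)

lemma obsDE_eq_obsE_mult_obsCond:
  assumes "obsE q e > 0"
  shows "obsDE q d e = obsE q e * (if d then obsCond q e else 1 - obsCond q e)"
proof -
  have "obsE q e * obsCond q e = obsDE q True e"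
    using assms by (simp add: obsCond_def)
  then show ?thesis
    using obsE_eq_sum_obsDE[of q e] by (cases d) (simp_all add: algebra_simps)
qed

lemma abs_convex_perturbation_le:
  fixes x y \<epsilon> :: real
  assumes "0 \<le> \<epsilon>" "0 \<le> x" "x \<le> 1" "0 \<le> y" "y \<le> 1"
  shows "\<bar>(1 - \<epsilon>) * x + \<epsilon> * y - x\<bar> \<le> \<epsilon>"
proof -
  have "(1 - \<epsilon>) * x + \<epsilon> * y - x = \<epsilon> * (y - x)" by (simp add: algebra_simps)
  moreover have "\<bar>y - x\<bar> \<le> 1" using assms by auto
  ultimately show ?thesis using assms(1) by (simp add: abs_mult mult_left_le)
qed

locale extremal_confounder =
  fixes w r :: "bool \<Rightarrow> real" and M m \<epsilon> :: real
  assumes w_pos: "\<And>e. 0 < w e" and w_sum: "w True + w False = 1"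
    and r_ge: "\<And>e. m \<le> r e" and r_le: "\<And>e. r e \<le> M"
    and m_nonneg: "0 \<le> m" and M_le_1: "M \<le> 1"
    and \<epsilon>_pos: "0 < \<epsilon>" and \<epsilon>_less_1: "\<epsilon> < 1"
begin

definition extreme :: "bool \<Rightarrow> real" where
  "extreme e = (if e then M else m)"

definition stratum :: "bool \<Rightarrow> ((bool \<times> bool \<times> nat) \<times> real) list" where
  "stratum u =
    [((True, u, of_bool u), w u * (1 - \<epsilon>) * r u),
     ((False, u, of_bool u), w u * (1 - \<epsilon>) * (1 - r u)),
     ((True, \<not> u, of_bool u), w u * \<epsilon> * extreme (\<not> u)),
     ((False, \<not> u, of_bool u), w u * \<epsilon> * (1 - extreme (\<not> u)))]"

definition model :: "(bool \<times> bool \<times> nat) pmf" where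
  "model = pmf_of_list (stratum True @ stratum False)"

lemma w_le_1: "w e \<le> 1"
  using w_pos[of True] w_pos[of False] w_sum by (cases e) auto

lemma m_le_M: "m \<le> M"
  using r_ge[of True] r_le[of True] by linarith

lemma extreme_bounds: "0 \<le> extreme e" "extreme e \<le> 1"
  using m_le_M m_nonneg M_le_1 by (auto simp: extreme_def)

lemma r_bounds: "0 \<le> r e" "r e \<le> 1"
  using r_ge[of e] r_le[of e] m_nonneg M_le_1 by linarith+

lemma model_wf: "pmf_of_list_wf (stratum True @ stratum False)"
proof (rule pmf_of_list_wfI)
  fix x assume "x \<in> set (map snd (stratum True @ stratum False))"
  then show "0 \<le> x"
    using less_imp_le[OF w_pos] \<epsilon>_pos \<epsilon>_less_1 r_bounds extreme_bounds
    by (auto simp: stratum_def intro!: mult_nonneg_nonneg)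
next
  show "sum_list (map snd (stratum True @ stratum False)) = 1"
    using w_sum by (simp add: stratum_def algebra_simps)
qed

lemma prob_model:
  "measure_pmf.prob model A =
     sum_list (map snd (filter (\<lambda>x. fst x \<in> A) (stratum True @ stratum False)))"
  unfolding model_def by (rule measure_pmf_of_list[OF model_wf])

lemma pmf_model:
  "pmf model x = sum_list (map snd (filter (\<lambda>z. fst z = x) (stratum True @ stratum False)))"
  unfolding model_def by (rule pmf_pmf_of_list[OF model_wf])

lemma finite_set_pmf_model: "finite (set_pmf model)"
  unfolding model_def by (rule finite_set_pmf_of_list[OF model_wf])

lemma pU_model: "pU model u = (if u = 0 then w False else if u = 1 then w True else 0)"
  by (simp add: pU_def prob_model stratum_def algebra_simps)

lemma pEU_model: "pEU model e (of_bool u) = w u * (if e = u then 1 - \<epsilon> else \<epsilon>)"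
  by (cases e; cases u) (simp_all add: pEU_def prob_model stratum_def algebra_simps)

lemma Usupp_model: "Usupp model = {0, 1}"
  using w_pos by (auto simp: Usupp_def pU_model split: if_splits)

lemma positivity_model: "positivity model"
proof -
  have "pEU model e u > 0" if "u \<in> {0, 1}" for e u
    using that pEU_model[of e False] pEU_model[of e True] w_pos \<epsilon>_pos \<epsilon>_less_1 by auto
  then show ?thesis
    using w_pos by (auto simp: positivity_def pU_model split: if_splits)
qed

lemma condD_model: "condD model e (of_bool u) = (if e = u then r u else extreme e)"
  using w_pos[of True] w_pos[of False] \<epsilon>_pos \<epsilon>_less_1
  by (cases e; cases u) (simp_all add: condD_def pmf_model stratum_def
      pEU_model[of _ True, simplified] pEU_model[of _ False, simplified])

lemma condD_model_values: "{condD model e u | e u. u \<in> Usupp model} = {r True, r False, M, m}"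
proof -
  have "{condD model e u | e u. u \<in> Usupp model} =
      {condD model True 1, condD model False 0, condD model True 0, condD model False 1}"
    unfolding Usupp_model by (auto, (case_tac e, auto)+)
  then show ?thesis
    using condD_model[of _ True] condD_model[of _ False] by (simp add: extreme_def)
qed

lemma sensM_model: "sensM model = M"
  using r_le[of True] r_le[of False] m_le_M by (simp add: sensM_def condD_model_values max_def)

lemma sensm_model: "sensm model = m"
  using r_ge[of True] r_ge[of False] r_le[of True] r_le[of False]
  by (simp add: sensm_def condD_model_values min_def)

lemma pDE_True_model: "pDE model True e = (1 - \<epsilon>) * (w e * r e) + \<epsilon> * (w (\<not> e) * extreme e)"
  by (cases e) (simp_all add: pDE_def prob_model stratum_def)

lemma pDE_False_model:
  "pDE model False e = (1 - \<epsilon>) * (w e * (1 - r e)) + \<epsilon> * (w (\<not> e) * (1 - extreme e))"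
  by (cases e) (simp_all add: pDE_def prob_model stratum_def)

lemma pE_model: "pE model e = (1 - \<epsilon>) * w e + \<epsilon> * w (\<not> e)"
  by (cases e) (simp_all add: pE_def prob_model stratum_def algebra_simps)

lemma pCF_model: "pCF model e = w e * r e + w (\<not> e) * extreme e"
  using condD_model[of e True] condD_model[of e False]
  by (cases e) (simp_all add: pCF_def Usupp_model pU_model)

lemma pCF_minus_bound_model:
  "pCF model e - (pDE model True e + pE model (\<not> e) * extreme e) = \<epsilon> * w e * (r e - extreme e)"
  by (simp add: pCF_model pDE_True_model pE_model algebra_simps)

lemma abs_pDE_model_minus_le:
  "\<bar>pDE model d e - w e * (if d then r e else 1 - r e)\<bar> \<le> \<epsilon>"
proof -
  have bounds: "0 \<le> w e' * x" "w e' * x \<le> 1" if "0 \<le> x" "x \<le> 1" for e' x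
    using that w_pos[of e'] w_le_1[of e'] by (simp_all add: mult_le_one)
  show ?thesis
    using r_bounds[of e] extreme_bounds[of e] \<epsilon>_pos
    by (cases d) (auto simp: pDE_True_model pDE_False_model intro!: abs_convex_perturbation_le bounds)
qed

lemma abs_pCF_minus_bound_model_le:
  "\<bar>pCF model e - (pDE model True e + pE model (\<not> e) * extreme e)\<bar> \<le> \<epsilon>"
proof -
  have "\<bar>r e - extreme e\<bar> \<le> 1"
    using r_bounds[of e] extreme_bounds[of e] by linarith
  then have "w e * \<bar>r e - extreme e\<bar> \<le> 1"
    using w_pos[of e] w_le_1[of e] by (simp add: mult_le_one)
  then show ?thesis
    using \<epsilon>_pos w_pos[of e] by (simp add: pCF_minus_bound_model abs_mult mult_left_le)
qed

end

theorem theorem2: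
  fixes q :: "(bool \<times> bool) pmf" and M' m' :: real
  assumes "obsE q True > 0" and "obsE q False > 0"
    and "max (obsCond q False) (obsCond q True) \<le> M'" and "M' \<le> 1"
    and "0 \<le> m'" and "m' \<le> min (obsCond q False) (obsCond q True)"
  shows "\<forall>\<delta>>0. \<exists>p :: (bool \<times> bool \<times> nat) pmf.
           finite (set_pmf p) \<and> positivity p \<and>
           \<bar>sensM p - M'\<bar> < \<delta> \<and> \<bar>sensm p - m'\<bar> < \<delta> \<and>
           (\<forall>d e. \<bar>pDE p d e - obsDE q d e\<bar> < \<delta>) \<and>
           \<bar>pCF p True - (pDE p True True + pE p False * sensM p)\<bar> < \<delta> \<and>
           \<bar>pCF p False - (pDE p True False + pE p True * sensm p)\<bar> < \<delta>"
proof (intro allI impI)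
  fix \<delta> :: real
  assume "\<delta> > 0"
  define \<epsilon> where "\<epsilon> = min (1/2) (\<delta>/2)"
  have \<epsilon>: "0 < \<epsilon>" "\<epsilon> < 1" "\<epsilon> < \<delta>"
    using \<open>\<delta> > 0\<close> by (auto simp: \<epsilon>_def)
  have obsE_pos: "0 < obsE q e" for e
    using assms(1,2) by (cases e) auto
  have obsCond_bounds: "m' \<le> obsCond q e" "obsCond q e \<le> M'" for e
    using assms(3,6) by (cases e; simp)+
  interpret extremal_confounder "obsE q" "obsCond q" M' m' \<epsilon>
    by (intro extremal_confounder.intro)
      (use obsE_pos obsCond_bounds obsE_True_plus_obsE_False assms(4,5) \<epsilon> in auto)
  have "\<bar>pDE model d e - obsDE q d e\<bar> < \<delta>" for d e
    using abs_pDE_model_minus_le[of d e] obsDE_eq_obsE_mult_obsCond[OF obsE_pos] \<epsilon> by simp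
  moreover have gap: "\<bar>pCF model e - (pDE model True e + pE model (\<not> e) * extreme e)\<bar> < \<delta>" for e
    using abs_pCF_minus_bound_model_le[of e] \<epsilon> by linarith
  ultimately show "\<exists>p :: (bool \<times> bool \<times> nat) pmf.
           finite (set_pmf p) \<and> positivity p \<and>
           \<bar>sensM p - M'\<bar> < \<delta> \<and> \<bar>sensm p - m'\<bar> < \<delta> \<and>
           (\<forall>d e. \<bar>pDE p d e - obsDE q d e\<bar> < \<delta>) \<and>
           \<bar>pCF p True - (pDE p True True + pE p False * sensM p)\<bar> < \<delta> \<and>
           \<bar>pCF p False - (pDE p True False + pE p True * sensm p)\<bar> < \<delta>"
    using gap[of True] gap[of False] finite_set_pmf_model positivity_model
      sensM_model sensm_model \<open>\<delta> > 0\<close>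
    by (intro exI[of _ model]) (auto simp: extreme_def)
qed

end
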